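(* Let $S$ be a nonempty set of graphs on $\Pi$. Then for every integer $i$ with $1\le i<\mathrm{eqdom}(S)$, $(i+(n-\mathrm{cov}_i(S)))$-set agreement is solvable in one round on the closed-above model generated by $\mathrm{Sym}(S)$.
   Context: Fix a set of $n$ processes $\Pi=\{p_1,\dots,p_n\}$. A graph is a directed graph with vertex set $\Pi$; every graph is assumed to contain all self-loops $(p,p)$. For a graph $G$ and $p\in\Pi$, $Out_G(p)=\{q:(p,q)\in E(G)\}$ and $In_G(p)=\{q:(q,p)\in E(G)\}$; for $P\subseteq\Pi$, $Out_G(P)=\bigcup_{p\in P}Out_G(p)$. Computation proceeds in failure-free, communication-closed rounds: in each round $r$ a graph $G_r$ is chosen and each process $p$ receives in round $r$ exactly the round-$r$ messages of the processes in $In_{G_r}(p)$. A communication model is a set of infinite sequences of graphs; an execution is allowed iff its sequence of round graphs belongs to the model. For a graph $G$, $\uparrow G=\{H: E(H)\supseteq E(G)\}$. The closed-above model generated by a set $S$ of graphs is $(\bigcup_{G\in S}\uparrow G)^\omega$. $\mathrm{Sym}(S)=\{\pi(G): G\in S,\ \pi \text{ a permutation of }\Pi\}$, where $\pi(G)$ has edges $\{(\pi(u),\pi(v)):(u,v)\in E(G)\}$. In $k$-set agreement each process starts with an input from a totally ordered set $V_{in}$ and must decide a value so that every decided value is the input of some process and at most $k$ distinct values are decided; it is solvable in $r$ rounds on a model if some algorithm guarantees this, with all processes deciding after $r$ rounds, in every allowed execution and for every input assignment. $\mathrm{eqdom}(G)=\min\{i\in[1,n]: \forall P\subseteq\Pi,\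 |P|=i\Rightarrow Out_G(P)=\Pi\}$, $\mathrm{eqdom}(S)=\max_{G\in S}\mathrm{eqdom}(G)$, $\mathrm{cov}_i(G)=\min_{P\subseteq\Pi,|P|=i}|Out_G(P)|$ and $\mathrm{cov}_i(S)=\min_{G\in S}\mathrm{cov}_i(G)$. *)

theory Defs
  imports Main "HOL-Library.Cardinality"
begin

text \<open>Processes are the elements of a finite type 'p (so \<Pi> = UNIV and n = CARD('p)).
A graph is its edge set; it must contain all self-loops.\<close>

type_synonym 'p graph = "('p \<times> 'p) set"

definition is_graph :: "'p graph \<Rightarrow> bool" where
  "is_graph G \<longleftrightarrow> (\<forall>p. (p, p) \<in> G)"

definition Out :: "'p graph \<Rightarrow> 'p \<Rightarrow> 'p set" where
  "Out G p = {q. (p, q) \<in> G}"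

definition In :: "'p graph \<Rightarrow> 'p \<Rightarrow> 'p set" where
  "In G p = {q. (q, p) \<in> G}"

definition OutSet :: "'p graph \<Rightarrow> 'p set \<Rightarrow> 'p set" where
  "OutSet G P = (\<Union>p\<in>P. Out G p)"

definition eqdom :: "('p::finite) graph \<Rightarrow> nat" where
  "eqdom G = (LEAST i. 1 \<le> i \<and> i \<le> CARD('p) \<and>
      (\<forall>P::'p set. card P = i \<longrightarrow> OutSet G P = UNIV))"

definition eqdom_set :: "('p::finite) graph set \<Rightarrow> nat" where
  "eqdom_set S = Max (eqdom ` S)"

definition cov :: "nat \<Rightarrow> ('p::finite) graph \<Rightarrow> nat" where
  "cov i G = Min {card (OutSet G P) | P::'p set. card P = i}"

definition cov_set :: "nat \<Rightarrow> ('p::finite) graph set \<Rightarrow> nat" where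
  "cov_set i S = Min (cov i ` S)"

text \<open>Upward closure of a graph and the closed-above model generated by S
  (infinite sequences of graphs, indexed by rounds r = 0,1,2,...).\<close>

definition up :: "'p graph \<Rightarrow> 'p graph set" where
  "up G = {H. G \<subseteq> H}"

definition closed_above_model :: "'p graph set \<Rightarrow> (nat \<Rightarrow> 'p graph) set" where
  "closed_above_model S = {\<sigma>. \<forall>r. \<sigma> r \<in> (\<Union>G\<in>S. up G)}"

definition perm_graph :: "('p \<Rightarrow> 'p) \<Rightarrow> 'p graph \<Rightarrow> 'p graph" where
  "perm_graph \<pi> G = {(\<pi> u, \<pi> v) | u v. (u, v) \<in> G}"

definition Sym :: "'p graph set \<Rightarrow> 'p graph set" where
  "Sym S = {perm_graph \<pi> G | \<pi> G. G \<in> S \<and> bij \<pi>}"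

text \<open>One-round algorithms, w.l.o.g. full-information: in round 1 every process
  sends its input; process p's view is the partial map giving the input of each
  q \<in> In_{G_1}(p); its decision is a function of its identity and its view.
  k-set agreement is solvable in one round on model M (inputs of type 'v) if some
  decision function satisfies validity and k-agreement in every execution of M and
  every input assignment.\<close>

definition view :: "'p graph \<Rightarrow> ('p \<Rightarrow> 'v) \<Rightarrow> 'p \<Rightarrow> ('p \<Rightarrow> 'v option)" where
  "view G x p = (\<lambda>q. if q \<in> In G p then Some (x q) else None)"

definition set_agreement_solvable_one_round ::
    "nat \<Rightarrow> (nat \<Rightarrow> ('p::finite) graph) set \<Rightarrow> 'v itself \<Rightarrow> bool" where
  "set_agreement_solvable_one_round k M (_ :: 'v itself) \<longleftrightarrow>
     (\<exists>dec :: 'p \<Rightarrow> ('p \<Rightarrow> 'v option) \<Rightarrow> 'v.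
        \<forall>\<sigma>\<in>M. \<forall>x :: 'p \<Rightarrow> 'v.
          (\<forall>p. dec p (view (\<sigma> 0) x p) \<in> range x) \<and>
          card (range (\<lambda>p. dec p (view (\<sigma> 0) x p))) \<le> k)"

end

theory Submission
  imports Defs
begin

text \<open>Every process decides the smallest input it receives. Let P be a set of i processes
  holding the i smallest inputs. A process hearing from P decides an input of P; all other
  processes, outside Out(P), contribute at most one value each. Since the round graph contains
  a relabelled copy of a graph of S, |Out(P)| \<ge> cov_i(S), so at most i + (n - cov_i(S)) values
  are decided. The bound holds for every i.\<close>

lemma ex_subset_card_below_rest:
  fixes x :: "'p \<Rightarrow> 'v::linorder"
  assumes "finite A" "k \<le> card A"
  shows "\<exists>P\<subseteq>A. card P = k \<and> (\<forall>q\<in>P. \<forall>r\<in>A - P. x q \<le> x r)"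
  using assms(2)
proof (induction k)
  case 0
  show ?case by (intro exI[of _ "{}"]) auto
next
  case (Suc k)
  then obtain P where P: "P \<subseteq> A" "card P = k" "\<forall>q\<in>P. \<forall>r\<in>A - P. x q \<le> x r"
    by auto
  have "finite P" using P(1) assms(1) finite_subset by blast
  with P Suc.prems have "A - P \<noteq> {}"
    by (metis Diff_eq_empty_iff assms(1) card_mono not_less_eq_eq)
  moreover have "finite (x ` (A - P))" using assms(1) by simp
  ultimately have "Min (x ` (A - P)) \<in> x ` (A - P)" by (intro Min_in) auto
  then obtain r where r: "r \<in> A - P" "x r = Min (x ` (A - P))" by auto
  then have "\<forall>r'\<in>A - P. x r \<le> x r'"
    using assms(1) by auto
  with P r \<open>finite P\<close> show ?case
    by (intro exI[of _ "insert r P"]) auto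
qed

lemma is_graph_mono: "is_graph G \<Longrightarrow> G \<subseteq> H \<Longrightarrow> is_graph H"
  unfolding is_graph_def by blast

lemma is_graph_perm_graph:
  assumes "is_graph G" "bij \<pi>"
  shows "is_graph (perm_graph \<pi> G)"
  unfolding is_graph_def perm_graph_def
proof
  fix p
  have "(inv \<pi> p, inv \<pi> p) \<in> G" using assms(1) unfolding is_graph_def by blast
  then have "(\<pi> (inv \<pi> p), \<pi> (inv \<pi> p)) \<in> {(\<pi> u, \<pi> v) |u v. (u, v) \<in> G}" by blast
  moreover have "\<pi> (inv \<pi> p) = p" using assms(2) by (simp add: bij_is_surj surj_f_inv_f)
  ultimately show "(p, p) \<in> {(\<pi> u, \<pi> v) |u v. (u, v) \<in> G}" by simp
qed

lemma OutSet_perm_graph: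
  assumes "bij \<pi>"
  shows "OutSet (perm_graph \<pi> G) P = \<pi> ` OutSet G (inv \<pi> ` P)"
proof (intro set_eqI iffI)
  fix q
  assume "q \<in> OutSet (perm_graph \<pi> G) P"
  then obtain u v where uv: "\<pi> u \<in> P" "q = \<pi> v" "(u, v) \<in> G"
    unfolding OutSet_def Out_def perm_graph_def by auto
  moreover have "inv \<pi> (\<pi> u) = u"
    using assms by (simp add: bij_is_inj)
  ultimately show "q \<in> \<pi> ` OutSet G (inv \<pi> ` P)"
    unfolding OutSet_def Out_def by (metis (mono_tags, lifting) UN_iff image_eqI mem_Collect_eq)
next
  fix q
  assume "q \<in> \<pi> ` OutSet G (inv \<pi> ` P)"
  then obtain p v where "p \<in> P" "q = \<pi> v" "(inv \<pi> p, v) \<in> G"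
    unfolding OutSet_def Out_def by auto
  moreover have "\<pi> (inv \<pi> p) = p"
    using assms by (simp add: bij_is_surj surj_f_inv_f)
  ultimately show "q \<in> OutSet (perm_graph \<pi> G) P"
    unfolding OutSet_def Out_def perm_graph_def by (metis (mono_tags, lifting) UN_iff mem_Collect_eq)
qed

lemma card_OutSet_perm_graph:
  assumes "bij \<pi>"
  shows "card (OutSet (perm_graph \<pi> G) P) = card (OutSet G (inv \<pi> ` P))"
  unfolding OutSet_perm_graph[OF assms]
  using assms by (meson bij_betw_imp_inj_on card_image inj_on_subset subset_UNIV)

lemma OutSet_mono: "G \<subseteq> H \<Longrightarrow> OutSet G P \<subseteq> OutSet H P"
  unfolding OutSet_def Out_def by blast

lemma cov_le_card_OutSet:
  fixes G :: "('p::finite) graph"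
  assumes "card P = i"
  shows "cov i G \<le> card (OutSet G P)"
  unfolding cov_def using assms by (intro Min_le) auto

lemma cov_set_le_card_OutSet_Sym:
  fixes H :: "('p::finite) graph"
  assumes "G \<in> S" "bij \<pi>" "perm_graph \<pi> G \<subseteq> H" "card P = i"
  shows "cov_set i S \<le> card (OutSet H P)"
proof -
  have "card (inv \<pi> ` P) = i"
    using assms(2,4) by (metis bij_imp_bij_inv bij_is_inj card_image inj_on_subset subset_UNIV)
  then have "cov_set i S \<le> card (OutSet G (inv \<pi> ` P))"
    using assms(1) cov_le_card_OutSet[of "inv \<pi> ` P" i G] unfolding cov_set_def
    by (meson Min_le finite finite_imageI image_eqI order_trans)
  also have "\<dots> = card (OutSet (perm_graph \<pi> G) P)"
    using card_OutSet_perm_graph[OF assms(2)] by simp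
  also have "\<dots> \<le> card (OutSet H P)"
    using assms(3) by (intro card_mono OutSet_mono) auto
  finally show ?thesis .
qed

definition min_received :: "('p \<Rightarrow> 'v::linorder option) \<Rightarrow> 'v" where
  "min_received w = Min {y. \<exists>q. w q = Some y}"

lemma min_received_view: "min_received (view H x p) = Min (x ` In H p)"
proof -
  have "{y. \<exists>q. view H x p q = Some y} = x ` In H p"
    by (auto simp: view_def split: if_splits)
  then show ?thesis unfolding min_received_def by simp
qed

lemma Min_image_In_mem:
  fixes H :: "('p::finite) graph" and x :: "'p \<Rightarrow> 'v::linorder"
  assumes "is_graph H"
  shows "Min (x ` In H p) \<in> x ` In H p"
  using assms unfolding is_graph_def In_def by (intro Min_in) auto

lemma Min_image_In_mem_lower_set:
  fixes H :: "('p::finite) graph" and x :: "'p \<Rightarrow> 'v::linorder"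
  assumes "is_graph H" "\<forall>q\<in>P. \<forall>r\<in>- P. x q \<le> x r" "p \<in> OutSet H P"
  shows "Min (x ` In H p) \<in> x ` P"
proof -
  obtain q where q: "q \<in> P" "q \<in> In H p"
    using assms(3) unfolding OutSet_def Out_def In_def by auto
  obtain q' where q': "q' \<in> In H p" "Min (x ` In H p) = x q'"
    using Min_image_In_mem[OF assms(1)] by blast
  have "x q' \<le> x q" using q(2) q'(2)[symmetric] by simp
  then show ?thesis
    using q q' assms(2) by (cases "q' \<in> P") (auto intro: antisym)
qed

lemma card_range_Min_image_In:
  fixes H :: "('p::finite) graph" and x :: "'p \<Rightarrow> 'v::linorder"
  assumes "is_graph H" "\<forall>q\<in>P. \<forall>r\<in>- P. x q \<le> x r"
  shows "card (range (\<lambda>p. Min (x ` In H p))) \<le> card P + (CARD('p) - card (OutSet H P))"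
proof -
  let ?d = "\<lambda>p. Min (x ` In H p)"
  have "range ?d \<subseteq> x ` P \<union> ?d ` (- OutSet H P)"
    using Min_image_In_mem_lower_set[OF assms] by blast
  then have "card (range ?d) \<le> card (x ` P \<union> ?d ` (- OutSet H P))"
    by (intro card_mono) simp_all
  also have "\<dots> \<le> card (x ` P) + card (?d ` (- OutSet H P))"
    by (rule card_Un_le)
  also have "\<dots> \<le> card P + card (- OutSet H P)"
    by (intro add_mono card_image_le) auto
  also have "card (- OutSet H P) = CARD('p) - card (OutSet H P)"
    by (simp add: Compl_eq_Diff_UNIV card_Diff_subset)
  finally show ?thesis .
qed

theorem mainTheorem5:
  fixes S :: "('p::finite) graph set" and i :: nat
  assumes "S \<noteq> {}"
    and "\<forall>G\<in>S. is_graph G"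
    and "1 \<le> i" and "i < eqdom_set S"
  shows "set_agreement_solvable_one_round (i + (CARD('p) - cov_set i S))
           (closed_above_model (Sym S)) TYPE('v::linorder)"
  unfolding set_agreement_solvable_one_round_def
proof (intro exI[of _ "\<lambda>_. min_received"] ballI allI)
  fix \<sigma> and x :: "'p \<Rightarrow> 'v"
  assume "\<sigma> \<in> closed_above_model (Sym S)"
  then obtain G \<pi> where G: "G \<in> S" "bij \<pi>" "perm_graph \<pi> G \<subseteq> \<sigma> 0"
    unfolding closed_above_model_def Sym_def up_def by blast
  then have H: "is_graph (\<sigma> 0)"
    using assms(2) by (meson is_graph_mono is_graph_perm_graph)
  have "\<forall>p. min_received (view (\<sigma> 0) x p) \<in> range x"
    using Min_image_In_mem[OF H, of x] by (auto simp: min_received_view)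
  moreover have "card (range (\<lambda>p. min_received (view (\<sigma> 0) x p))) \<le> i + (CARD('p) - cov_set i S)"
  proof (cases "CARD('p) \<le> i")
    case True
    then show ?thesis by (metis card_image_le finite le_add1 order_trans)
  next
    case False
    then obtain P :: "'p set" where P: "card P = i" "\<forall>q\<in>P. \<forall>r\<in>- P. x q \<le> x r"
      using ex_subset_card_below_rest[of UNIV i x] by (auto simp: Compl_eq_Diff_UNIV)
    have "cov_set i S \<le> card (OutSet (\<sigma> 0) P)"
      using cov_set_le_card_OutSet_Sym[OF G P(1)] .
    then show ?thesis
      using card_range_Min_image_In[OF H P(2)] P(1) by (simp add: min_received_view)
  qed
  ultimately show "(\<forall>p. min_received (view (\<sigma> 0) x p) \<in> range x) \<and>
      card (range (\<lambda>p. min_received (view (\<sigma> 0) x p))) \<le> i + (CARD('p) - cov_set i S)"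
    by blast
qed

end
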